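(* Let $\alpha$ be a set and $\odot:\alpha\times\alpha\to\alpha$. Calls $\mathrm{reduce}(\odot,\mathit{rdd})$ have deterministic outcomes if and only if $(\alpha,\odot)$ is a commutative semigroup, i.e. $\odot$ is associative and commutative.
   Context: Lists are finite; $\mathbin{+\!\!+}$ is concatenation. $\mathrm{foldl}(f,b,[\,])=b$, $\mathrm{foldl}(f,b,[x_1,\dots,x_n])=f(\cdots f(f(b,x_1),x_2)\cdots,x_n)$; for a nonempty list, $\mathrm{reducel}(f,[x_1,\dots,x_n])=\mathrm{foldl}(f,x_1,[x_2,\dots,x_n])$. An RDD is a list of lists. A partitioning (for reduce) is a function $P$ sending each nonempty list $L$ to an RDD obtained by splitting $L$ into consecutive nonempty pieces $p_1,\dots,p_n$ with $p_1\mathbin{+\!\!+}\cdots\mathbin{+\!\!+}p_n=L$ and then arbitrarily permuting $[p_1,\dots,p_n]$. $\mathrm{reduce}_{\mathrm{det}}(\odot,[q_1,\dots,q_m])=\mathrm{reducel}(\odot,[\mathrm{reducel}(\odot,q_1),\dots,\mathrm{reducel}(\odot,q_m)])$. Calls $\mathrm{reduce}(\odot,\mathit{rdd})$ have deterministic outcomes if $\mathrm{reduce}_{\mathrm{det}}(\odot,P(L))=\mathrm{reducel}(\odot,L)$ for all nonempty lists $L$ over $\alpha$ and all such partitionings $P$. *)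

theory Defs
  imports Main "HOL-Library.Multiset"
begin

text \<open>reducel f [x1,...,xn] = foldl f x1 [x2,...,xn]; only used on nonempty lists.\<close>
definition reducel :: "('a \<Rightarrow> 'a \<Rightarrow> 'a) \<Rightarrow> 'a list \<Rightarrow> 'a" where
  "reducel f xs = foldl f (hd xs) (tl xs)"

text \<open>An RDD R arises from L by splitting L into consecutive nonempty pieces
  and arbitrarily permuting the list of pieces.\<close>
definition is_partition_of :: "'a list list \<Rightarrow> 'a list \<Rightarrow> bool" where
  "is_partition_of R L \<longleftrightarrow>
     (\<exists>ps. (\<forall>p\<in>set ps. p \<noteq> []) \<and> concat ps = L \<and> mset R = mset ps)"

definition partitioning :: "('a list \<Rightarrow> 'a list list) \<Rightarrow> bool" where
  "partitioning P \<longleftrightarrow> (\<forall>L. L \<noteq> [] \<longrightarrow> is_partition_of (P L) L)"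

definition reduce_det :: "('a \<Rightarrow> 'a \<Rightarrow> 'a) \<Rightarrow> 'a list list \<Rightarrow> 'a" where
  "reduce_det f qs = reducel f (map (reducel f) qs)"

definition deterministic_reduce :: "('a \<Rightarrow> 'a \<Rightarrow> 'a) \<Rightarrow> bool" where
  "deterministic_reduce f \<longleftrightarrow>
     (\<forall>P. partitioning P \<longrightarrow> (\<forall>L. L \<noteq> [] \<longrightarrow> reduce_det f (P L) = reducel f L))"

end

theory Submission
  imports Defs
begin

text \<open>If \<open>f\<close> is associative, \<open>reducel\<close> turns concatenation into \<open>f\<close>, so reducing the pieces
  of a split and then the partial results gives the reduction of the whole list; if \<open>f\<close> is
  moreover commutative, \<open>reducel\<close> depends only on the multiset of its arguments, so permuting
  the pieces does not matter. Conversely, the partitionings sending \<open>[x, y, z]\<close> to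
  \<open>[[x], [y, z]]\<close> and \<open>[x, y]\<close> to \<open>[[y], [x]]\<close> force associativity and commutativity.\<close>

context semigroup
begin

lemma foldl_f_assoc: "foldl f (f a b) xs = f a (foldl f b xs)"
  by (induction xs arbitrary: b) (simp_all add: assoc)

lemma reducel_append:
  assumes "xs \<noteq> []" "ys \<noteq> []"
  shows "reducel f (xs @ ys) = f (reducel f xs) (reducel f ys)"
proof -
  obtain y ys' where ys: "ys = y # ys'" using assms(2) by (cases ys) auto
  have "reducel f (xs @ ys) = foldl f (reducel f xs) ys"
    using assms(1) by (cases xs) (simp_all add: reducel_def)
  also have "\<dots> = f (reducel f xs) (reducel f ys)"
    by (simp add: ys reducel_def foldl_f_assoc)
  finally show ?thesis .
qed

lemma reducel_map_reducel:
  assumes "ps \<noteq> []" "\<forall>p\<in>set ps. p \<noteq> []"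
  shows "reducel f (map (reducel f) ps) = reducel f (concat ps)"
  using assms
proof (induction ps)
  case Nil
  then show ?case by simp
next
  case (Cons p ps)
  show ?case
  proof (cases "ps = []")
    case True
    then show ?thesis by (simp add: reducel_def)
  next
    case False
    then have "concat ps \<noteq> []" using Cons.prems(2) by (cases ps) auto
    have "reducel f (map (reducel f) (p # ps)) = f (reducel f p) (reducel f (map (reducel f) ps))"
      using reducel_append[of "[reducel f p]" "map (reducel f) ps"] False
      by (simp add: reducel_def)
    also have "\<dots> = f (reducel f p) (reducel f (concat ps))"
      using Cons False by simp
    also have "\<dots> = reducel f (concat (p # ps))"
      using reducel_append[of p "concat ps"] Cons.prems \<open>concat ps \<noteq> []\<close> by simp
    finally show ?thesis .
  qed
qed

end

text \<open>Adjoining a unit \<open>None\<close> turns \<open>reducel\<close> into a \<open>fold\<close>, whose invariance under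
  permutations is \<open>fold_multiset_equiv\<close>.\<close>

definition snoc_option :: "('a \<Rightarrow> 'a \<Rightarrow> 'a) \<Rightarrow> 'a \<Rightarrow> 'a option \<Rightarrow> 'a option" where
  "snoc_option f x a = (case a of None \<Rightarrow> Some x | Some b \<Rightarrow> Some (f b x))"

lemma fold_snoc_option_Some: "fold (snoc_option f) xs (Some a) = Some (foldl f a xs)"
  by (induction xs arbitrary: a) (simp_all add: snoc_option_def)

lemma fold_snoc_option_None:
  "xs \<noteq> [] \<Longrightarrow> fold (snoc_option f) xs None = Some (reducel f xs)"
  by (cases xs) (simp_all add: reducel_def snoc_option_def fold_snoc_option_Some)

context abel_semigroup
begin

lemma snoc_option_comp_commute:
  "snoc_option f x \<circ> snoc_option f y = snoc_option f y \<circ> snoc_option f x"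
  by (rule ext) (simp add: snoc_option_def commute left_commute split: option.split)

lemma reducel_mset_eq:
  assumes "xs \<noteq> []" "mset xs = mset ys"
  shows "reducel f xs = reducel f ys"
proof -
  have "ys \<noteq> []" using assms by auto
  have "fold (snoc_option f) xs = fold (snoc_option f) ys"
    using assms(2) snoc_option_comp_commute by (intro fold_multiset_equiv) auto
  then show ?thesis
    using fold_snoc_option_None[of xs f] fold_snoc_option_None[of ys f] assms(1) \<open>ys \<noteq> []\<close>
    by simp
qed

lemma deterministic_reduce: "deterministic_reduce f"
  unfolding deterministic_reduce_def
proof (intro allI impI)
  fix P :: "'a list \<Rightarrow> 'a list list" and L :: "'a list"
  assume "partitioning P" "L \<noteq> []"
  then obtain ps where ps: "\<forall>p\<in>set ps. p \<noteq> []" "concat ps = L" "mset (P L) = mset ps"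
    unfolding partitioning_def is_partition_of_def by blast
  then have "ps \<noteq> []" "P L \<noteq> []" using \<open>L \<noteq> []\<close> by auto
  have "reduce_det f (P L) = reducel f (map (reducel f) ps)"
    using reducel_mset_eq[of "map (reducel f) (P L)" "map (reducel f) ps"] \<open>P L \<noteq> []\<close> ps(3)
    by (simp add: reduce_det_def)
  also have "\<dots> = reducel f L"
    using reducel_map_reducel[OF \<open>ps \<noteq> []\<close> ps(1)] ps(2) by simp
  finally show "reduce_det f (P L) = reducel f L" .
qed

end

lemma is_partition_of_singleton: "L \<noteq> [] \<Longrightarrow> is_partition_of [L] L"
  unfolding is_partition_of_def by (intro exI[of _ "[L]"]) simp

text \<open>Any single partition of a list is realised by some partitioning, namely the one leaving
  every other list in one piece.\<close>

lemma deterministic_reduce_partition: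
  assumes "deterministic_reduce f" "is_partition_of R L" "L \<noteq> []"
  shows "reduce_det f R = reducel f L"
proof -
  let ?P = "\<lambda>L'. if L' = L then R else [L']"
  have "partitioning ?P"
    unfolding partitioning_def using assms(2) is_partition_of_singleton by auto
  then have "reduce_det f (?P L) = reducel f L"
    using assms(1,3) unfolding deterministic_reduce_def by blast
  then show ?thesis by simp
qed

lemma deterministic_reduce_abel_semigroup:
  assumes "deterministic_reduce f"
  shows "abel_semigroup f"
proof unfold_locales
  fix x y z :: 'a
  have "is_partition_of [[x], [y, z]] [x, y, z]"
    unfolding is_partition_of_def by (intro exI[of _ "[[x], [y, z]]"]) simp
  from deterministic_reduce_partition[OF assms this]
  show "f (f x y) z = f x (f y z)" by (simp add: reduce_det_def reducel_def)
next
  fix x y :: 'a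
  have "is_partition_of [[y], [x]] [x, y]"
    unfolding is_partition_of_def by (intro exI[of _ "[[x], [y]]"]) auto
  from deterministic_reduce_partition[OF assms this]
  show "f x y = f y x" by (simp add: reduce_det_def reducel_def)
qed

theorem corollary2:
  fixes f :: "'a \<Rightarrow> 'a \<Rightarrow> 'a"
  shows "deterministic_reduce f \<longleftrightarrow>
    (\<forall>x y z. f (f x y) z = f x (f y z)) \<and> (\<forall>x y. f x y = f y x)"
proof -
  have "abel_semigroup f \<longleftrightarrow>
      (\<forall>x y z. f (f x y) z = f x (f y z)) \<and> (\<forall>x y. f x y = f y x)"
    unfolding abel_semigroup_def abel_semigroup_axioms_def semigroup_def by blast
  then show ?thesis
    using deterministic_reduce_abel_semigroup abel_semigroup.deterministic_reduce by blast
qed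

end
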